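(* Let $A$ be a real $m\times m$ matrix, $f,f_\delta\in\mathbb{R}^m$ with $\|f_\delta-f\|\le\delta$, $q\in(0,1)$. Define $u_1=u_1^\delta=0$, $u_{n+1}=q^nT_{q^n}^{-1}u_n+T_{q^n}^{-1}A^*f$ and $u_{n+1}^\delta=q^nT_{q^n}^{-1}u_n^\delta+T_{q^n}^{-1}A^*f_\delta$ for $n\ge1$. Then for all $n\ge1$, $$\|u_n^\delta-u_n\|\le\frac{\sqrt q}{1-\sqrt q}\,\frac{\delta}{2\sqrt{q^n}}.$$
   Context: $A^*$ is the transpose of $A$, $T:=A^*A$, $T_a:=T+aI$ for $a>0$; $\|\cdot\|$ is the Euclidean norm. *)

theory Defs
  imports "HOL-Analysis.Analysis"
begin

definition Tmat :: "real^'m^'m \<Rightarrow> real^'m^'m" where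
  "Tmat A = transpose A ** A"

definition Ta :: "real^'m^'m \<Rightarrow> real \<Rightarrow> real^'m^'m" where
  "Ta A a = Tmat A + a *\<^sub>R mat 1"

text \<open>The iteration u_1 = 0, u_{n+1} = q^n T_{q^n}^{-1} u_n + T_{q^n}^{-1} A^* g.
  iter A g q n is u_n; the value at index 0 is unused (set to 0).\<close>
fun iter :: "real^'m^'m \<Rightarrow> real^'m \<Rightarrow> real \<Rightarrow> nat \<Rightarrow> real^'m" where
  "iter A g q 0 = 0"
| "iter A g q (Suc 0) = 0"
| "iter A g q (Suc (Suc k)) =
     (let n = Suc k in
       (q ^ n) *\<^sub>R (matrix_inv (Ta A (q ^ n)) *v iter A g q n)
       + matrix_inv (Ta A (q ^ n)) *v (transpose A *v g))"

end

theory Submission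
  imports Defs
begin

(* For a > 0 the matrix T_a = A^T A + a I satisfies
   y . T_a y = |A y|^2 + a |y|^2, hence it is invertible and its inverse obeys
     |a T_a^{-1} x| <= |x|                 (T_a^{-1} is a-contractive),
     |T_a^{-1} A^T g| <= |g| / (2 sqrt a)  (from |Ay|^2 + a|y|^2 <= |Ay| |g|).
   Since the iteration is affine in the data, the error e_n = u_n^delta - u_n
   satisfies e_1 = 0 and e_(n+1) = q^n T^{-1} e_n + T^{-1} A^T (f_delta - f),
   so |e_(n+1)| <= |e_n| + delta / (2 sqrt(q^n)).  An elementary lemma on
   sequences growing by c / r^n (with r = sqrt q < 1) sums this geometric
   bound to  |e_n| <= r/(1-r) * c / r^n  with c = delta/2, which is the claim. *)

lemma invertible_matrix_inv_vector:
  fixes M :: "'a::field^'n^'n"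
  assumes "invertible M"
  shows "M *v (matrix_inv M *v x) = x"
proof -
  have "M ** matrix_inv M = mat 1"
    using assms unfolding invertible_def matrix_inv_def by (rule someI2_ex) blast
  then show ?thesis by (metis matrix_vector_mul_assoc matrix_vector_mul_lid)
qed

lemma Ta_mult_vector: "Ta A a *v y = transpose A *v (A *v y) + a *\<^sub>R y"
proof -
  have "(a *\<^sub>R mat 1) *v y = a *\<^sub>R y"
    by (simp add: scaleR_matrix_vector_assoc[symmetric])
  then show ?thesis
    unfolding Ta_def Tmat_def
    by (simp add: matrix_vector_mult_add_rdistrib matrix_vector_mul_assoc)
qed

lemma Ta_quadratic_form: "y \<bullet> (Ta A a *v y) = (A *v y) \<bullet> (A *v y) + a * (y \<bullet> y)"
proof -
  have "y \<bullet> (transpose A *v (A *v y)) = (A *v y) \<bullet> (A *v y)"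
    by (simp add: inner_commute[of y] dot_lmul_matrix)
  then show ?thesis unfolding Ta_mult_vector by (simp add: inner_add_right)
qed

lemma Ta_invertible:
  assumes "0 < a"
  shows "invertible (Ta A a)"
proof -
  have "Ta A a *v y = 0 \<Longrightarrow> y = 0" for y
  proof -
    assume "Ta A a *v y = 0"
    then have "(A *v y) \<bullet> (A *v y) + a * (y \<bullet> y) = 0"
      using Ta_quadratic_form[of y A a] by simp
    then have "a * (y \<bullet> y) = 0"
      using assms by (smt (verit) inner_ge_zero mult_nonneg_nonneg)
    then show "y = 0" using assms by simp
  qed
  then show ?thesis
    by (simp add: invertible_left_inverse matrix_left_invertible_ker)
qed

lemma Ta_solve:
  assumes "0 < a"
  shows "Ta A a *v (matrix_inv (Ta A a) *v x) = x"
  using invertible_matrix_inv_vector[OF Ta_invertible[OF assms]] .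

lemma norm_scaled_Ta_inverse_le:
  assumes "0 < a"
  shows "norm (a *\<^sub>R (matrix_inv (Ta A a) *v x)) \<le> norm x"
proof -
  define y where "y = matrix_inv (Ta A a) *v x"
  have "a * (y \<bullet> y) \<le> y \<bullet> x"
    using Ta_quadratic_form[of y A a] Ta_solve[OF assms, of A x] by (simp add: y_def)
  also have "\<dots> \<le> norm y * norm x" by (rule norm_cauchy_schwarz)
  finally have "norm y * (a * norm y) \<le> norm y * norm x"
    by (simp add: dot_square_norm power2_eq_square algebra_simps)
  then have "a * norm y \<le> norm x"
    by (cases "norm y = 0") auto
  then show ?thesis using assms by (simp add: y_def)
qed

lemma norm_Ta_inverse_adjoint_le:
  assumes "0 < a"
  shows "norm (matrix_inv (Ta A a) *v (transpose A *v g)) \<le> norm g / (2 * sqrt a)"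
proof -
  define y where "y = matrix_inv (Ta A a) *v (transpose A *v g)"
  define s where "s = norm (A *v y)"
  have "Ta A a *v y = transpose A *v g"
    unfolding y_def by (rule Ta_solve[OF assms])
  then have "s\<^sup>2 + a * (norm y)\<^sup>2 = y \<bullet> (transpose A *v g)"
    using Ta_quadratic_form[of y A a] by (simp add: s_def power2_norm_eq_inner)
  also have "\<dots> = (A *v y) \<bullet> g"
    by (metis dot_lmul_matrix inner_commute transpose_matrix_vector)
  also have "\<dots> \<le> s * norm g"
    unfolding s_def by (rule norm_cauchy_schwarz)
  finally have "a * (norm y)\<^sup>2 \<le> s * norm g - s\<^sup>2" by simp
  also have "\<dots> \<le> (norm g)\<^sup>2 / 4"
    using zero_le_power2[of "s - norm g / 2"] by (simp add: power2_eq_square algebra_simps)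
  finally have "(norm y)\<^sup>2 \<le> (norm g / (2 * sqrt a))\<^sup>2"
    using assms by (simp add: power_divide power_mult_distrib field_simps)
  then have "norm y \<le> norm g / (2 * sqrt a)"
    by (rule power2_le_imp_le) (use assms in simp)
  then show ?thesis by (simp add: y_def)
qed

lemma iter_difference_Suc_Suc:
  "iter A g' q (Suc (Suc k)) - iter A g q (Suc (Suc k))
     = q ^ Suc k *\<^sub>R (matrix_inv (Ta A (q ^ Suc k)) *v (iter A g' q (Suc k) - iter A g q (Suc k)))
       + matrix_inv (Ta A (q ^ Suc k)) *v (transpose A *v (g' - g))"
proof -
  have unfold: "iter A h q (Suc (Suc k))
      = q ^ Suc k *\<^sub>R (matrix_inv (Ta A (q ^ Suc k)) *v iter A h q (Suc k))
        + matrix_inv (Ta A (q ^ Suc k)) *v (transpose A *v h)" for h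
    by (simp only: iter.simps Let_def)
  show ?thesis
    unfolding unfold by (simp only: matrix_vector_mult_diff_distrib scaleR_diff_right) simp
qed

lemma iter_difference_step:
  assumes "norm (g' - g) \<le> \<delta>" and "0 < q"
  shows "norm (iter A g' q (Suc (Suc k)) - iter A g q (Suc (Suc k)))
           \<le> norm (iter A g' q (Suc k) - iter A g q (Suc k)) + \<delta> / (2 * sqrt (q ^ Suc k))"
proof -
  define a where "a = q ^ Suc k"
  have a: "0 < a" using assms(2) by (simp add: a_def)
  define M where "M = matrix_inv (Ta A a)"
  define e where "e = iter A g' q (Suc k) - iter A g q (Suc k)"
  have "norm (iter A g' q (Suc (Suc k)) - iter A g q (Suc (Suc k)))
          = norm (a *\<^sub>R (M *v e) + M *v (transpose A *v (g' - g)))"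
    unfolding a_def M_def e_def by (simp only: iter_difference_Suc_Suc)
  also have "\<dots> \<le> norm (a *\<^sub>R (M *v e)) + norm (M *v (transpose A *v (g' - g)))"
    by (rule norm_triangle_ineq)
  also have "\<dots> \<le> norm e + norm (g' - g) / (2 * sqrt a)"
    unfolding M_def
    by (intro add_mono norm_scaled_Ta_inverse_le norm_Ta_inverse_adjoint_le a)
  also have "\<dots> \<le> norm e + \<delta> / (2 * sqrt a)"
    using assms(1) a by (simp add: divide_right_mono)
  finally show ?thesis by (simp add: e_def a_def)
qed

text \<open>A sequence starting below \<open>c / (1 - r)\<close> whose increments are at most
  \<open>c / r\<^sup>k\<close> (with \<open>0 < r < 1\<close>) stays below \<open>r / (1 - r) \<cdot> c / r\<^sup>n\<close>:
  the geometric sum is dominated by its last term.\<close>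
lemma geometric_increment_bound:
  fixes x :: "nat \<Rightarrow> real"
  assumes r: "0 < r" "r < 1"
    and start: "x (Suc 0) \<le> c / (1 - r)"
    and step: "\<And>k. x (Suc (Suc k)) \<le> x (Suc k) + c / r ^ Suc k"
    and n: "1 \<le> n"
  shows "x n \<le> r / (1 - r) * (c / r ^ n)"
proof -
  have "x (Suc k) \<le> r / (1 - r) * (c / r ^ Suc k)" for k
  proof (induction k)
    case 0
    then show ?case using start r by simp
  next
    case (Suc k)
    have "r / (1 - r) * (c / r ^ Suc k) + c / r ^ Suc k = r / (1 - r) * (c / r ^ Suc (Suc k))"
      using r by (simp add: field_simps)
    then show ?case using Suc.IH step[of k] by linarith
  qed
  moreover obtain k where "n = Suc k" using n by (cases n) auto
  ultimately show ?thesis by simp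
qed

theorem lemma3p2:
  fixes A :: "real^'m^'m" and f f\<delta> :: "real^'m" and \<delta> q :: real and n :: nat
  assumes "norm (f\<delta> - f) \<le> \<delta>"
    and "0 < q" and "q < 1"
    and "1 \<le> n"
  shows "norm (iter A f\<delta> q n - iter A f q n)
           \<le> sqrt q / (1 - sqrt q) * (\<delta> / (2 * sqrt (q ^ n)))"
proof -
  define err where "err k = norm (iter A f\<delta> q k - iter A f q k)" for k
  have sqrt_power: "sqrt (q ^ k) = sqrt q ^ k" for k by (simp add: real_sqrt_power)
  have "0 \<le> \<delta>" using assms(1) norm_ge_zero order_trans by blast
  then have start: "err (Suc 0) \<le> (\<delta> / 2) / (1 - sqrt q)"
    using assms(3) by (simp add: err_def)
  have step: "err (Suc (Suc k)) \<le> err (Suc k) + (\<delta> / 2) / sqrt q ^ Suc k" for k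
    using iter_difference_step[OF assms(1,2), of A k] unfolding err_def sqrt_power by simp
  have "err n \<le> sqrt q / (1 - sqrt q) * ((\<delta> / 2) / sqrt q ^ n)"
    using assms(2-4) by (intro geometric_increment_bound[OF _ _ start step]) simp_all
  then show ?thesis by (simp add: err_def sqrt_power)
qed

end
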